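(* In the quantum LOCAL model, the subgraph state construction problem can be solved in $2$ rounds: on any network $G=(V,E)$ where each node $u\in V$ receives a bit $c_u\in\{0,1\}$, there is a $2$-round quantum LOCAL algorithm at the end of which the graph state of the induced subgraph $G'=(V',E')$ of $G$ on $V'=\{v\in V: c_v=1\}$ is shared by the nodes of $V'$, each node $v\in V'$ holding the one-qubit register $\mathsf{Q}_v$ of that graph state.
   Context: Quantum LOCAL model: the network is an undirected unweighted graph; each node is a quantum processor with a distinct identifier, initially knowing only its incident edges and the number of nodes. Computation proceeds in synchronous rounds; in each round each node performs arbitrary local quantum operations and sends one quantum message (any number of qubits) together with classical information to each neighbour. Initially no entanglement or randomness is shared. Graph state of a graph $G'=(V',E')$: take one-qubit registers $\mathsf{Q}_u$, $u\in V'$, initialized to $\bigotimes_{u}|0\rangle_{\mathsf{Q}_u}$, apply the Hadamard gate $\mathrm{H}=\frac{1}{\sqrt2}\begin{pmatrix}1&1\\1&-1\end{pmatrix}$ to each register, then for each edge $\{u,v\}\in E'$ apply the controlled-$Z$ gate $\mathrm{CZ}=\mathrm{diag}(1,1,1,-1)$ to $(\mathsf{Q}_u,\mathsf{Q}_v)$. *)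

theory Defs
  imports Complex_Main
begin

(* A qubit is labelled by (creating node, local index). *)
type_synonym qubit = "nat \<times> nat"
(* computational basis states: a bit for every qubit (all but finitely many are 0) *)
type_synonym basis = "qubit \<Rightarrow> bool"
(* (unnormalised) pure states: amplitude of each basis state *)
type_synonym qvec = "basis \<Rightarrow> complex"
(* operator acting on a set S of qubits: matrix entry  K b a  = <b|K|a>,
   with a, b assignments of the qubits in S *)
type_synonym qop = "basis \<Rightarrow> basis \<Rightarrow> complex"

definition restr :: "qubit set \<Rightarrow> basis \<Rightarrow> basis" where
  "restr S b = (\<lambda>q. q \<in> S \<and> b q)"

definition ovr :: "qubit set \<Rightarrow> basis \<Rightarrow> basis \<Rightarrow> basis" where
  "ovr S b a = (\<lambda>q. if q \<in> S then a q else b q)"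

definition assigns :: "qubit set \<Rightarrow> basis set" where
  "assigns S = {a. \<forall>q. a q \<longrightarrow> q \<in> S}"

record init_view =
  nid   :: nat
  nbrs  :: "nat set"
  nsize :: nat
  inp   :: bool

(* a message: classical part (encoded as a natural number) and the set of qubits sent *)
type_synonym msg = "nat \<times> qubit set"

(* history of a node, newest round first: (measurement outcome of the local
   operation of that round, messages received from each node in that round) *)
type_synonym hist = "(nat \<times> (nat \<Rightarrow> msg)) list"

type_synonym view = "init_view \<times> hist"

(* Each node u creates nq qubits (u,0),...,(u,nq-1),
   all initialised to |0>.  In every round it applies a quantum instrument
   (Kraus operators kraus w k, outcomes k in outs w) to the qubits it currently
   holds, where w is its current view; then, depending on its view and the
   outcome, sends to each neighbour a classical message and a set of qubits.
   After the last round it applies one more local instrument and designates an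
   output qubit. *)
record qalg =
  nq     :: "init_view \<Rightarrow> nat"
  outs   :: "view \<Rightarrow> nat set"
  kraus  :: "view \<Rightarrow> nat \<Rightarrow> qop"
  send   :: "view \<Rightarrow> nat \<Rightarrow> nat \<Rightarrow> msg"
  outq   :: "view \<Rightarrow> nat \<Rightarrow> qubit"

(* qubits held by a node, as determined by its own view *)
fun owned :: "qalg \<Rightarrow> init_view \<Rightarrow> hist \<Rightarrow> qubit set" where
  "owned A iv [] = {(nid iv, i) | i. i < nq A iv}"
| "owned A iv ((k, rcv) # hs) =
     (owned A iv hs - (\<Union>v. snd (send A (iv, hs) k v))) \<union> (\<Union>v. snd (rcv v))"

definition valid_alg :: "qalg \<Rightarrow> bool" where
  "valid_alg A \<longleftrightarrow>
    (\<forall>iv hs. finite (outs A (iv, hs)) \<and>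
      (finite (owned A iv hs) \<longrightarrow>
        (\<forall>a\<in>assigns (owned A iv hs). \<forall>a'\<in>assigns (owned A iv hs).
           (\<Sum>k\<in>outs A (iv, hs). \<Sum>b\<in>assigns (owned A iv hs).
               cnj (kraus A (iv, hs) k b a) * kraus A (iv, hs) k b a')
           = (if a = a' then 1 else 0))) \<and>
      (\<forall>k v. snd (send A (iv, hs) k v) \<subseteq> owned A iv hs \<and>
             (v \<notin> nbrs iv \<longrightarrow> snd (send A (iv, hs) k v) = {})) \<and>
      (\<forall>k v v'. v \<noteq> v' \<longrightarrow> snd (send A (iv, hs) k v) \<inter> snd (send A (iv, hs) k v') = {}))"

(* finite simple undirected graph on vertex set V (vertices = identifiers) *)
definition simple_graph :: "nat set \<Rightarrow> nat set set \<Rightarrow> bool" where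
  "simple_graph V E \<longleftrightarrow> finite V \<and>
     (\<forall>e\<in>E. \<exists>u v. e = {u, v} \<and> u \<noteq> v \<and> u \<in> V \<and> v \<in> V)"

definition nb :: "nat set set \<Rightarrow> nat \<Rightarrow> nat set" where
  "nb E u = {v. {u, v} \<in> E}"

definition iview :: "nat set \<Rightarrow> nat set set \<Rightarrow> (nat \<Rightarrow> bool) \<Rightarrow> nat \<Rightarrow> init_view" where
  "iview V E c u = \<lparr>nid = u, nbrs = nb E u, nsize = card V, inp = c u\<rparr>"

(* simultaneous application of the local operators K u on the (disjoint) qubit sets S u *)
definition apply_ops :: "nat set \<Rightarrow> (nat \<Rightarrow> qubit set) \<Rightarrow> (nat \<Rightarrow> qop) \<Rightarrow> qvec \<Rightarrow> qvec" where
  "apply_ops V S K \<psi> = (\<lambda>b. \<Sum>a\<in>assigns (\<Union>u\<in>V. S u).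
       (\<Prod>u\<in>V. K u (restr (S u) b) (restr (S u) a)) * \<psi> (ovr (\<Union>u\<in>V. S u) b a))"

(* execution along the outcome branch \<omega> (\<omega> r u = outcome of node u in step r):
   after r steps, the histories of all nodes and the unnormalised global state *)
fun run :: "qalg \<Rightarrow> nat set \<Rightarrow> nat set set \<Rightarrow> (nat \<Rightarrow> bool) \<Rightarrow> (nat \<Rightarrow> nat \<Rightarrow> nat)
            \<Rightarrow> nat \<Rightarrow> (nat \<Rightarrow> hist) \<times> qvec" where
  "run A V E c \<omega> 0 = ((\<lambda>u. []), (\<lambda>b. if b = (\<lambda>_. False) then 1 else 0))"
| "run A V E c \<omega> (Suc r) =
     (let H = fst (run A V E c \<omega> r); \<psi> = snd (run A V E c \<omega> r);
          w = (\<lambda>u. (iview V E c u, H u));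
          \<psi>' = apply_ops V (\<lambda>u. owned A (iview V E c u) (H u)) (\<lambda>u. kraus A (w u) (\<omega> r u)) \<psi>;
          H' = (\<lambda>u. (\<omega> r u, (\<lambda>v. if v \<in> V \<and> v \<in> nb E u then send A (w v) (\<omega> r v) u else (0, {}))) # H u)
      in (H', \<psi>'))"

(* amplitude of basis state x (on the vertices V') in the graph state of (V',E'):
   H^{\<otimes>V'} then CZ on every edge *)
definition graph_state_amp :: "nat set \<Rightarrow> nat set set \<Rightarrow> (nat \<Rightarrow> bool) \<Rightarrow> complex" where
  "graph_state_amp V' E' x =
     complex_of_real ((1 / sqrt 2) ^ card V' * (-1) ^ card {e\<in>E'. \<forall>v\<in>e. x v})"

definition solves_subgraph_state :: "qalg \<Rightarrow> nat \<Rightarrow> bool" where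
  "solves_subgraph_state A R \<longleftrightarrow>
    (\<forall>V E c \<omega>. simple_graph V E \<and>
       (\<forall>r\<le>R. \<forall>u\<in>V. \<omega> r u \<in> outs A (iview V E c u, fst (run A V E c \<omega> r) u)) \<longrightarrow>
       (let V' = {v\<in>V. c v}; E' = {e\<in>E. e \<subseteq> V'};
            q = (\<lambda>v. outq A (iview V E c v, fst (run A V E c \<omega> R) v) (\<omega> R v));
            \<psi> = snd (run A V E c \<omega> (Suc R))
        in inj_on q V' \<and>
           (\<forall>v\<in>V'. q v \<in> owned A (iview V E c v) (fst (run A V E c \<omega> R) v)) \<and>
           (\<exists>\<phi>. \<forall>b. \<psi> b = graph_state_amp V' E' (\<lambda>v. b (q v)) * \<phi> (\<lambda>p. p \<notin> q ` V' \<and> b p))))"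

end

theory Submission
  imports Defs "HOL-Library.Countable_Set"
begin

(* Each participating node u prepares the GHZ state (|0...0> + |1...1>)/sqrt 2 on its vertex
   qubit (u, 0) and on one copy qubit (u, Suc v) for every neighbour v > u, and sends that copy
   to v.  On the support of this state every copy carries the value of its owner's vertex qubit,
   so if each node applies CZ between its vertex qubit and every copy it received, each edge of
   the induced subgraph gets exactly one CZ, at its larger endpoint.  The copies are then sent
   back, and CNOTs from (u, 0) onto them undo the GHZ encoding, leaving the graph state on
   the vertex qubits and |0> on all other qubits. *)

lemma finite_assigns: "finite S \<Longrightarrow> finite (assigns S)"
proof -
  assume "finite S"
  have "inj_on (\<lambda>a. {q. a q}) (assigns S)"
    by (auto simp: inj_on_def)
  moreover have "(\<lambda>a. {q. a q}) ` assigns S \<subseteq> Pow S"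
    by (auto simp: assigns_def)
  ultimately show ?thesis
    using \<open>finite S\<close> by (meson finite_Pow_iff inj_on_finite)
qed

lemma zero_in_assigns [simp]: "(\<lambda>_. False) \<in> assigns S"
  by (simp add: assigns_def)

lemma restr_zero [simp]: "restr S (\<lambda>_. False) = (\<lambda>_. False)"
  by (simp add: restr_def)

lemma restr_in_assigns [simp]: "restr S b \<in> assigns S"
  by (simp add: restr_def assigns_def)

lemma indicator_in_assigns: "T \<subseteq> S \<Longrightarrow> (\<lambda>p. p \<in> T) \<in> assigns S"
  by (auto simp: assigns_def)

lemma restr_restr: "S \<subseteq> U \<Longrightarrow> restr S (restr U b) = restr S b"
  by (auto simp: restr_def fun_eq_iff)

lemma ovr_restr_self [simp]: "ovr U b (restr U b) = b"
  by (simp add: ovr_def restr_def fun_eq_iff)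

lemma assigns_UN_eqI:
  assumes "a \<in> assigns (\<Union>u\<in>V. S u)" "a' \<in> assigns (\<Union>u\<in>V. S u)"
    and "\<And>u. u \<in> V \<Longrightarrow> restr (S u) a = restr (S u) a'"
  shows "a = a'"
proof
  fix p
  show "a p = a' p"
  proof (cases "\<exists>u\<in>V. p \<in> S u")
    case True
    then obtain u where "u \<in> V" "p \<in> S u" by blast
    then show ?thesis
      using fun_cong[OF assms(3), of u p] by (simp add: restr_def)
  next
    case False
    then show ?thesis
      using assms(1,2) unfolding assigns_def by blast
  qed
qed

definition monomial_op :: "(basis \<Rightarrow> basis) \<Rightarrow> (basis \<Rightarrow> complex) \<Rightarrow> qop" where
  "monomial_op \<pi> d b a = (if b = \<pi> a then d a else 0)"

lemma monomial_op_orthonormal: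
  assumes "finite S" and maps: "\<pi> ` assigns S \<subseteq> assigns S" and inj: "inj_on \<pi> (assigns S)"
    and unit: "\<And>a. a \<in> assigns S \<Longrightarrow> cnj (d a) * d a = 1"
    and a: "a \<in> assigns S" and a': "a' \<in> assigns S"
  shows "(\<Sum>b\<in>assigns S. cnj (monomial_op \<pi> d b a) * monomial_op \<pi> d b a')
         = (if a = a' then 1 else 0)"
proof -
  have "(\<Sum>b\<in>assigns S. cnj (monomial_op \<pi> d b a) * monomial_op \<pi> d b a')
      = (\<Sum>b\<in>assigns S. if b = \<pi> a then (if \<pi> a = \<pi> a' then cnj (d a) * d a' else 0) else 0)"
    by (rule sum.cong) (auto simp: monomial_op_def)
  also have "\<dots> = (if \<pi> a = \<pi> a' then cnj (d a) * d a' else 0)"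
    using assms by (simp add: sum.delta' finite_assigns image_subset_iff)
  also have "\<dots> = (if a = a' then 1 else 0)"
    using inj unit a a' by (auto dest: inj_onD)
  finally show ?thesis .
qed

definition measure_prepare :: "(basis \<Rightarrow> nat) \<Rightarrow> qvec \<Rightarrow> nat \<Rightarrow> qop" where
  "measure_prepare code \<phi> k b a = (if code a = k then \<phi> b else 0)"

lemma measure_prepare_orthonormal:
  assumes "finite S" and inj: "inj_on code (assigns S)"
    and norm: "(\<Sum>b\<in>assigns S. cnj (\<phi> b) * \<phi> b) = 1"
    and a: "a \<in> assigns S" and a': "a' \<in> assigns S"
  shows "(\<Sum>k\<in>code ` assigns S. \<Sum>b\<in>assigns S.
           cnj (measure_prepare code \<phi> k b a) * measure_prepare code \<phi> k b a')
         = (if a = a' then 1 else 0)"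
proof -
  have "(\<Sum>k\<in>code ` assigns S. \<Sum>b\<in>assigns S.
           cnj (measure_prepare code \<phi> k b a) * measure_prepare code \<phi> k b a')
      = (\<Sum>k\<in>code ` assigns S. if code a = k then (if code a' = k then 1 else 0) else 0)"
    by (rule sum.cong) (auto simp: measure_prepare_def norm)
  also have "\<dots> = (if code a' = code a then 1 else 0)"
    using assms by (simp add: sum.delta finite_assigns)
  also have "\<dots> = (if a = a' then 1 else 0)"
    using inj a a' by (auto dest: inj_onD)
  finally show ?thesis .
qed

definition ghz :: "qubit set \<Rightarrow> qvec" where
  "ghz T b = (if b = (\<lambda>_. False) \<or> b = (\<lambda>p. p \<in> T)
     then (if T = {} then 1 else complex_of_real (1 / sqrt 2)) else 0)"

lemma ghz_normalized:
  assumes "finite S" "T \<subseteq> S"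
  shows "(\<Sum>b\<in>assigns S. cnj (ghz T b) * ghz T b) = 1"
proof (cases "T = {}")
  case True
  have "(\<Sum>b\<in>assigns S. cnj (ghz T b) * ghz T b) = (\<Sum>b\<in>assigns S. if b = (\<lambda>_. False) then 1 else 0)"
    by (rule sum.cong) (auto simp: ghz_def True)
  then show ?thesis
    using assms by (simp add: finite_assigns)
next
  case False
  have distinct: "(\<lambda>_. False) \<noteq> (\<lambda>p. p \<in> T)"
    using False by (auto simp: fun_eq_iff)
  have half: "cnj (complex_of_real (1 / sqrt 2)) * complex_of_real (1 / sqrt 2) = 1 / 2"
    by (simp flip: of_real_mult)
  have "(\<Sum>b\<in>assigns S. cnj (ghz T b) * ghz T b) = (\<Sum>b\<in>{\<lambda>_. False, \<lambda>p. p \<in> T}. 1 / 2)"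
    using assms False half
    by (intro sum.mono_neutral_cong_right) (auto simp: finite_assigns indicator_in_assigns ghz_def)
  also have "\<dots> = 1"
    using distinct by simp
  finally show ?thesis .
qed

lemma prod_if_zero:
  "finite V \<Longrightarrow> (\<Prod>u\<in>V. if P u then f u else (0::'a::comm_semiring_1)) = (if \<forall>u\<in>V. P u then \<Prod>u\<in>V. f u else 0)"
  by (induction V rule: finite_induct) auto

lemma apply_ops_cong:
  "(\<And>u. u \<in> V \<Longrightarrow> S u = S' u) \<Longrightarrow> apply_ops V S K \<psi> = apply_ops V S' K \<psi>"
  unfolding apply_ops_def by (simp cong: prod.cong)

lemma apply_ops_basis_zero:
  assumes "finite V" "\<And>u. u \<in> V \<Longrightarrow> finite (S u)"
  shows "apply_ops V S K (\<lambda>b. if b = (\<lambda>_. False) then 1 else 0) b =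
    (if b \<in> assigns (\<Union>u\<in>V. S u) then \<Prod>u\<in>V. K u (restr (S u) b) (\<lambda>_. False) else 0)"
proof -
  let ?U = "\<Union>u\<in>V. S u"
  have zero: "ovr ?U b a = (\<lambda>_. False) \<longleftrightarrow> a = (\<lambda>_. False) \<and> b \<in> assigns ?U"
    if "a \<in> assigns ?U" for a
    using that unfolding assigns_def ovr_def fun_eq_iff mem_Collect_eq by (smt (verit))
  have "apply_ops V S K (\<lambda>b. if b = (\<lambda>_. False) then 1 else 0) b =
    (\<Sum>a\<in>assigns ?U. if a = (\<lambda>_. False) then
       (if b \<in> assigns ?U then \<Prod>u\<in>V. K u (restr (S u) b) (\<lambda>_. False) else 0) else 0)"
    unfolding apply_ops_def by (rule sum.cong) (auto simp: zero)
  also have "\<dots> = (if b \<in> assigns ?U then \<Prod>u\<in>V. K u (restr (S u) b) (\<lambda>_. False) else 0)"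
    using assms by (simp add: sum.delta' finite_assigns)
  finally show ?thesis .
qed

lemma apply_ops_monomial:
  assumes "finite V" "\<And>u. u \<in> V \<Longrightarrow> finite (S u)"
    and K: "\<And>u. u \<in> V \<Longrightarrow> K u = monomial_op (\<pi> u) (d u)"
    and invol: "\<And>u a. u \<in> V \<Longrightarrow> \<pi> u (\<pi> u a) = a"
    and b': "b' \<in> assigns (\<Union>u\<in>V. S u)" "\<And>u. u \<in> V \<Longrightarrow> restr (S u) b' = \<pi> u (restr (S u) b)"
  shows "apply_ops V S K \<psi> b = (\<Prod>u\<in>V. d u (restr (S u) b')) * \<psi> (ovr (\<Union>u\<in>V. S u) b b')"
proof -
  let ?U = "\<Union>u\<in>V. S u"
  have "(\<Prod>u\<in>V. K u (restr (S u) b) (restr (S u) a)) =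
      (if a = b' then \<Prod>u\<in>V. d u (restr (S u) b') else 0)" if a: "a \<in> assigns ?U" for a
  proof -
    have "restr (S u) b = \<pi> u (restr (S u) a) \<longleftrightarrow> restr (S u) a = restr (S u) b'" if "u \<in> V" for u
      using invol[OF that] b'(2)[OF that] by metis
    then have "(\<forall>u\<in>V. restr (S u) b = \<pi> u (restr (S u) a)) \<longleftrightarrow> a = b'"
      using assigns_UN_eqI[OF a b'(1)] by auto
    then show ?thesis
      using assms(1) K by (simp add: monomial_op_def prod_if_zero cong: prod.cong)
  qed
  then have "apply_ops V S K \<psi> b =
      (\<Sum>a\<in>assigns ?U. if a = b' then (\<Prod>u\<in>V. d u (restr (S u) b')) * \<psi> (ovr ?U b b') else 0)"
    unfolding apply_ops_def by (intro sum.cong) auto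
  also have "\<dots> = (\<Prod>u\<in>V. d u (restr (S u) b')) * \<psi> (ovr ?U b b')"
    using assms(1,2) b'(1) by (simp add: sum.delta' finite_assigns)
  finally show ?thesis .
qed

lemma apply_ops_diagonal:
  assumes "finite V" "\<And>u. u \<in> V \<Longrightarrow> finite (S u)"
    and "\<And>u. u \<in> V \<Longrightarrow> K u = monomial_op id (d u)"
  shows "apply_ops V S K \<psi> b = (\<Prod>u\<in>V. d u (restr (S u) b)) * \<psi> b"
proof -
  have "apply_ops V S K \<psi> b =
      (\<Prod>u\<in>V. d u (restr (S u) (restr (\<Union>u\<in>V. S u) b))) * \<psi> (ovr (\<Union>u\<in>V. S u) b (restr (\<Union>u\<in>V. S u) b))"
    using assms by (intro apply_ops_monomial[where \<pi> = "\<lambda>_. id"]) (auto simp: restr_restr[OF UN_upper])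
  also have "\<dots> = (\<Prod>u\<in>V. d u (restr (S u) b)) * \<psi> b"
    by (simp add: restr_restr[OF UN_upper] ovr_restr_self)
  finally show ?thesis .
qed

lemma ghz_product_support:
  assumes disjoint: "\<And>u w. u \<in> V \<Longrightarrow> w \<in> V \<Longrightarrow> u \<noteq> w \<Longrightarrow> S u \<inter> S w = {}"
    and T: "\<And>u. u \<in> V \<Longrightarrow> T u \<subseteq> S u" and t: "\<And>u. u \<in> V \<Longrightarrow> T u \<noteq> {} \<Longrightarrow> t u \<in> T u"
  shows "b \<in> assigns (\<Union>u\<in>V. S u) \<and>
      (\<forall>u\<in>V. restr (S u) b = (\<lambda>_. False) \<or> restr (S u) b = (\<lambda>p. p \<in> T u))
     \<longleftrightarrow> b = (\<lambda>p. \<exists>u\<in>V. b (t u) \<and> p \<in> T u)"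
proof -
  have block: "restr (S u) b = (\<lambda>_. False) \<or> restr (S u) b = (\<lambda>p. p \<in> T u)
      \<longleftrightarrow> (\<forall>p\<in>S u. b p \<longleftrightarrow> b (t u) \<and> p \<in> T u)" if u: "u \<in> V" for u
  proof
    assume "restr (S u) b = (\<lambda>_. False) \<or> restr (S u) b = (\<lambda>p. p \<in> T u)"
    then show "\<forall>p\<in>S u. b p \<longleftrightarrow> b (t u) \<and> p \<in> T u"
    proof
      assume zero: "restr (S u) b = (\<lambda>_. False)"
      have "\<not> b q" if "q \<in> S u" for q
        using fun_cong[OF zero, of q] that by (simp add: restr_def)
      then show ?thesis
        using T[OF u] t[OF u] by blast
    next
      assume ind: "restr (S u) b = (\<lambda>p. p \<in> T u)"
      have "b q \<longleftrightarrow> q \<in> T u" if "q \<in> S u" for q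
        using fun_cong[OF ind, of q] that by (simp add: restr_def)
      then show ?thesis
        using T[OF u] t[OF u] by blast
    qed
  next
    assume "\<forall>p\<in>S u. b p \<longleftrightarrow> b (t u) \<and> p \<in> T u"
    then show "restr (S u) b = (\<lambda>_. False) \<or> restr (S u) b = (\<lambda>p. p \<in> T u)"
      using T[OF u] by (auto simp: restr_def fun_eq_iff)
  qed
  have "b \<in> assigns (\<Union>u\<in>V. S u) \<and> (\<forall>u\<in>V. \<forall>p\<in>S u. b p \<longleftrightarrow> b (t u) \<and> p \<in> T u)
     \<longleftrightarrow> b = (\<lambda>p. \<exists>u\<in>V. b (t u) \<and> p \<in> T u)"
  proof
    assume "b \<in> assigns (\<Union>u\<in>V. S u) \<and> (\<forall>u\<in>V. \<forall>p\<in>S u. b p \<longleftrightarrow> b (t u) \<and> p \<in> T u)"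
    then show "b = (\<lambda>p. \<exists>u\<in>V. b (t u) \<and> p \<in> T u)"
      using T unfolding assigns_def fun_eq_iff mem_Collect_eq by (meson UN_E subsetD)
  next
    assume ext: "b = (\<lambda>p. \<exists>u\<in>V. b (t u) \<and> p \<in> T u)"
    have "b p \<longleftrightarrow> b (t u) \<and> p \<in> T u" if "u \<in> V" "p \<in> S u" for u p
      using fun_cong[OF ext, of p] T disjoint that by (metis disjoint_iff subsetD)
    moreover have "b \<in> assigns (\<Union>u\<in>V. S u)"
      using ext T unfolding assigns_def mem_Collect_eq by (metis UN_I subsetD)
    ultimately show "b \<in> assigns (\<Union>u\<in>V. S u) \<and> (\<forall>u\<in>V. \<forall>p\<in>S u. b p \<longleftrightarrow> b (t u) \<and> p \<in> T u)"
      by blast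
  qed
  then show ?thesis
    using block by simp
qed

lemma simple_graph_edgeE:
  assumes "simple_graph V E" "e \<in> E"
  obtains u v where "e = {u, v}" "u \<noteq> v" "u \<in> V" "v \<in> V"
  using assms by (auto simp: simple_graph_def)

lemma nb_sym: "v \<in> nb E u \<longleftrightarrow> u \<in> nb E v"
  by (simp add: nb_def insert_commute)

lemma nb_subset: "simple_graph V E \<Longrightarrow> nb E u \<subseteq> V"
  by (auto simp: nb_def doubleton_eq_iff elim!: simple_graph_edgeE)

lemma finite_nb:
  assumes "simple_graph V E"
  shows "finite (nb E u)"
  using finite_subset[OF nb_subset[OF assms]] assms by (simp add: simple_graph_def)

lemma card_induced_edges:
  assumes G: "simple_graph V E" and A: "A \<subseteq> V"
  shows "card {e \<in> E. e \<subseteq> A} = (\<Sum>u\<in>A. card {v \<in> nb E u \<inter> A. v < u})"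
proof -
  let ?B = "\<lambda>u. {v \<in> nb E u \<inter> A. v < u}"
  have "bij_betw (\<lambda>(u, v). {u, v}) (Sigma A ?B) {e \<in> E. e \<subseteq> A}"
  proof (rule bij_betwI')
    fix p q assume "p \<in> Sigma A ?B" "q \<in> Sigma A ?B"
    then show "((case p of (u, v) \<Rightarrow> {u, v}) = (case q of (u, v) \<Rightarrow> {u, v})) = (p = q)"
      by (auto simp: doubleton_eq_iff)
  next
    fix p assume "p \<in> Sigma A ?B"
    then show "(case p of (u, v) \<Rightarrow> {u, v}) \<in> {e \<in> E. e \<subseteq> A}"
      by (auto simp: nb_def)
  next
    fix e assume e: "e \<in> {e \<in> E. e \<subseteq> A}"
    then obtain u v where uv: "e = {u, v}" "u \<noteq> v"
      using G by (auto elim: simple_graph_edgeE)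
    then have "(max u v, min u v) \<in> Sigma A ?B"
      using e by (auto simp: nb_def insert_commute max_def min_def)
    moreover have "e = {max u v, min u v}"
      using uv by (auto simp: max_def min_def)
    ultimately show "\<exists>p\<in>Sigma A ?B. e = (case p of (u, v) \<Rightarrow> {u, v})"
      by auto
  qed
  then have "card {e \<in> E. e \<subseteq> A} = card (Sigma A ?B)"
    by (simp add: bij_betw_same_card)
  also have "\<dots> = (\<Sum>u\<in>A. card (?B u))"
    using G A finite_nb by (intro card_SigmaI) (auto simp: simple_graph_def finite_subset)
  finally show ?thesis .
qed

definition cz_phase :: "qubit \<Rightarrow> qubit set \<Rightarrow> basis \<Rightarrow> complex" where
  "cz_phase t F a = (if a t then (-1) ^ card {p \<in> F. a p} else 1)"

definition cnot_fan :: "qubit \<Rightarrow> qubit set \<Rightarrow> basis \<Rightarrow> basis" where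
  "cnot_fan t F a = (\<lambda>p. if p \<in> F then a p \<noteq> a t else a p)"

lemma cz_phase_unit: "cnj (cz_phase t F a) * cz_phase t F a = 1"
  by (simp add: cz_phase_def flip: power_mult_distrib)

lemma cz_phase_restr:
  assumes "t \<in> S" "F \<subseteq> S"
  shows "cz_phase t F (restr S a) = cz_phase t F a"
proof -
  have "{p \<in> F. restr S a p} = {p \<in> F. a p}"
    using assms(2) by (auto simp: restr_def)
  then show ?thesis
    using assms(1) by (simp add: cz_phase_def restr_def)
qed

lemma cnot_fan_involution: "t \<notin> F \<Longrightarrow> cnot_fan t F (cnot_fan t F a) = a"
  by (auto simp: cnot_fan_def)

lemma cnot_fan_in_assigns: "F \<subseteq> S \<Longrightarrow> a \<in> assigns S \<Longrightarrow> cnot_fan t F a \<in> assigns S"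
  by (auto simp: cnot_fan_def assigns_def)

definition nqubits :: "init_view \<Rightarrow> nat" where
  "nqubits iv = Suc (Suc (Max (insert 0 (nbrs iv))))"

definition initial_qubits :: "init_view \<Rightarrow> qubit set" where
  "initial_qubits iv = {(nid iv, i) | i. i < nqubits iv}"

(* (u, Suc v) is the copy meant for the neighbour v; the bound on Suc v only matters for views
   with infinitely many neighbours. *)
definition ghz_qubits :: "init_view \<Rightarrow> qubit set" where
  "ghz_qubits iv = (if inp iv then insert (nid iv, 0)
     {(nid iv, Suc v) | v. v \<in> nbrs iv \<and> nid iv < v \<and> Suc v < nqubits iv} else {})"

definition last_received :: "hist \<Rightarrow> qubit set" where
  "last_received hs = (case hs of [] \<Rightarrow> {} | (_, rcv) # _ \<Rightarrow> (\<Union>v. snd (rcv v)))"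

definition outcome_code :: "init_view \<Rightarrow> basis \<Rightarrow> nat" where
  "outcome_code iv = to_nat_on (assigns (initial_qubits iv))"

fun gs_outs :: "view \<Rightarrow> nat set" where
  "gs_outs (iv, []) = outcome_code iv ` assigns (initial_qubits iv)"
| "gs_outs (iv, _ # _) = {0}"

(* Measuring the fresh register before preparing the GHZ state makes the first instrument complete
   on every input; in the run only the outcome of the all-zero assignment occurs (zero_outcomes
   below).  The CZ phase needs no guard on the input bit: on the support of the state the vertex
   qubit of a non-participating node is 0. *)
fun gs_kraus :: "view \<Rightarrow> nat \<Rightarrow> qop" where
  "gs_kraus (iv, []) = measure_prepare (outcome_code iv) (ghz (ghz_qubits iv))"
| "gs_kraus (iv, [h]) = (\<lambda>_. monomial_op id (cz_phase (nid iv, 0) (last_received [h])))"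
| "gs_kraus (iv, [h, h']) =
     (\<lambda>_. monomial_op (cnot_fan (nid iv, 0) (last_received [h, h'] - {(nid iv, 0)})) (\<lambda>_. 1))"
| "gs_kraus (iv, _) = (\<lambda>_. monomial_op id (\<lambda>_. 1))"

fun gs_send :: "view \<Rightarrow> nat \<Rightarrow> nat \<Rightarrow> msg" where
  "gs_send (iv, []) _ v = (0, {p \<in> ghz_qubits iv. p = (nid iv, Suc v)})"
| "gs_send (iv, [h]) _ v = (0, if v \<in> nbrs iv then {p \<in> last_received [h]. fst p = v} else {})"
| "gs_send (iv, _) _ _ = (0, {})"

definition graph_state_alg :: qalg where
  "graph_state_alg = \<lparr>nq = nqubits, outs = gs_outs, kraus = gs_kraus, send = gs_send,
     outq = (\<lambda>w _. (nid (fst w), 0))\<rparr>"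

lemma graph_state_alg_simps [simp]:
  "nq graph_state_alg = nqubits" "outs graph_state_alg = gs_outs" "kraus graph_state_alg = gs_kraus"
  "send graph_state_alg = gs_send" "outq graph_state_alg w k = (nid (fst w), 0)"
  by (simp_all add: graph_state_alg_def)

declare owned.simps [simp del]

lemma finite_initial_qubits [simp]: "finite (initial_qubits iv)"
  by (simp add: initial_qubits_def)

lemma nqubits_pos [simp]: "0 < nqubits iv"
  by (simp add: nqubits_def)

lemma vertex_qubit_initial_iff [simp]: "(u, 0) \<in> initial_qubits iv \<longleftrightarrow> u = nid iv"
  by (auto simp: initial_qubits_def)

lemma ghz_qubits_subset: "ghz_qubits iv \<subseteq> initial_qubits iv"
  by (auto simp: ghz_qubits_def initial_qubits_def nqubits_def)

lemma owned_Nil: "owned graph_state_alg iv [] = initial_qubits iv"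
  by (simp add: owned.simps initial_qubits_def)

lemma last_received_subset_owned: "last_received hs \<subseteq> owned A iv hs"
  by (cases hs) (auto simp: last_received_def owned.simps)

lemma gs_kraus_orthonormal:
  assumes fin: "finite (owned graph_state_alg iv hs)"
    and a: "a \<in> assigns (owned graph_state_alg iv hs)" and a': "a' \<in> assigns (owned graph_state_alg iv hs)"
  shows "(\<Sum>k\<in>gs_outs (iv, hs). \<Sum>b\<in>assigns (owned graph_state_alg iv hs).
      cnj (gs_kraus (iv, hs) k b a) * gs_kraus (iv, hs) k b a') = (if a = a' then 1 else 0)"
proof (cases "(iv, hs)" rule: gs_kraus.cases)
  case 1
  then have hs: "hs = []"
    by simp
  have "inj_on (outcome_code iv) (assigns (initial_qubits iv))"
    unfolding outcome_code_def by (intro inj_on_to_nat_on countable_finite finite_assigns finite_initial_qubits)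
  then show ?thesis
    using a a' unfolding hs owned_Nil gs_outs.simps gs_kraus.simps
    by (intro measure_prepare_orthonormal ghz_normalized ghz_qubits_subset) simp_all
next
  case (2 iv' h)
  then show ?thesis
    using monomial_op_orthonormal[OF fin, of id] a a' by (simp add: cz_phase_unit)
next
  case (3 iv' h h')
  let ?\<pi> = "cnot_fan (nid iv, 0) (last_received [h, h'] - {(nid iv, 0)})"
  have "?\<pi> ` assigns (owned graph_state_alg iv hs) \<subseteq> assigns (owned graph_state_alg iv hs)"
    using 3 last_received_subset_owned by (auto intro!: cnot_fan_in_assigns)
  moreover have "inj_on ?\<pi> (assigns (owned graph_state_alg iv hs))"
    by (rule inj_on_inverseI[where g = ?\<pi>]) (simp add: cnot_fan_involution)
  ultimately show ?thesis
    using 3 monomial_op_orthonormal[OF fin] a a' by simp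
next
  case (4 iv' h h' h'' hs')
  then show ?thesis
    using monomial_op_orthonormal[OF fin, of id] a a' by simp
qed

lemma valid_graph_state_alg: "valid_alg graph_state_alg"
  unfolding valid_alg_def graph_state_alg_simps
proof (intro allI conjI impI ballI)
  fix iv hs
  show "finite (gs_outs (iv, hs))"
    by (cases hs) (simp_all add: finite_assigns)
  show "\<And>a a'. finite (owned graph_state_alg iv hs) \<Longrightarrow> a \<in> assigns (owned graph_state_alg iv hs) \<Longrightarrow>
      a' \<in> assigns (owned graph_state_alg iv hs) \<Longrightarrow>
      (\<Sum>k\<in>gs_outs (iv, hs). \<Sum>b\<in>assigns (owned graph_state_alg iv hs).
        cnj (gs_kraus (iv, hs) k b a) * gs_kraus (iv, hs) k b a') = (if a = a' then 1 else 0)"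
    by (rule gs_kraus_orthonormal)
  fix k v
  show "snd (gs_send (iv, hs) k v) \<subseteq> owned graph_state_alg iv hs"
  proof (cases "((iv, hs), k, v)" rule: gs_send.cases)
    case 1
    then show ?thesis
      using ghz_qubits_subset by (auto simp: owned_Nil)
  next
    case (2 iv' h)
    then show ?thesis
      using last_received_subset_owned[of "[h]"] by auto
  qed auto
  show "v \<notin> nbrs iv \<Longrightarrow> snd (gs_send (iv, hs) k v) = {}"
    by (cases "((iv, hs), k, v)" rule: gs_send.cases) (auto simp: ghz_qubits_def)
  show "\<And>v'. v \<noteq> v' \<Longrightarrow> snd (gs_send (iv, hs) k v) \<inter> snd (gs_send (iv, hs) k v') = {}"
    by (cases "((iv, hs), k, v)" rule: gs_send.cases) auto
qed

declare run.simps [simp del]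

lemma run_0 [simp]:
  "fst (run A V E c \<omega> 0) u = []" "snd (run A V E c \<omega> 0) = (\<lambda>b. if b = (\<lambda>_. False) then 1 else 0)"
  by (simp_all add: run.simps)

lemma run_Suc_hist:
  "fst (run A V E c \<omega> (Suc r)) u = (\<omega> r u, \<lambda>v. if v \<in> V \<and> v \<in> nb E u
     then send A (iview V E c v, fst (run A V E c \<omega> r) v) (\<omega> r v) u else (0, {})) # fst (run A V E c \<omega> r) u"
  by (simp add: run.simps Let_def)

lemma run_Suc_state:
  "snd (run A V E c \<omega> (Suc r)) = apply_ops V (\<lambda>u. owned A (iview V E c u) (fst (run A V E c \<omega> r) u))
     (\<lambda>u. kraus A (iview V E c u, fst (run A V E c \<omega> r) u) (\<omega> r u)) (snd (run A V E c \<omega> r))"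
  by (simp add: run.simps Let_def)

lemma owned_Cons:
  "owned A iv (h # hs) = (owned A iv hs - (\<Union>v. snd (send A (iv, hs) (fst h) v))) \<union> last_received (h # hs)"
  by (cases h) (simp add: owned.simps last_received_def)

lemma owned_run_Suc:
  "owned A (iview V E c u) (fst (run A V E c \<omega> (Suc r)) u) =
    (owned A (iview V E c u) (fst (run A V E c \<omega> r) u)
       - (\<Union>v. snd (send A (iview V E c u, fst (run A V E c \<omega> r) u) (\<omega> r u) v)))
    \<union> last_received (fst (run A V E c \<omega> (Suc r)) u)"
proof -
  obtain rcv where "fst (run A V E c \<omega> (Suc r)) u = (\<omega> r u, rcv) # fst (run A V E c \<omega> r) u"
    by (simp add: run_Suc_hist)
  then show ?thesis
    by (simp add: owned_Cons)
qed

lemma length_run_hist: "length (fst (run A V E c \<omega> r) u) = r"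
  by (induction r) (simp_all add: run_Suc_hist)

lemma gs_kraus_length_1:
  "length hs = 1 \<Longrightarrow> gs_kraus (iv, hs) = (\<lambda>_. monomial_op id (cz_phase (nid iv, 0) (last_received hs)))"
  by (cases hs) auto

lemma gs_kraus_length_2:
  "length hs = 2 \<Longrightarrow>
    gs_kraus (iv, hs) = (\<lambda>_. monomial_op (cnot_fan (nid iv, 0) (last_received hs - {(nid iv, 0)})) (\<lambda>_. 1))"
  by (cases hs rule: remdups_adj.cases) auto

lemma gs_send_length_1:
  "length hs = 1 \<Longrightarrow> gs_send (iv, hs) k v = (0, if v \<in> nbrs iv then {p \<in> last_received hs. fst p = v} else {})"
  by (cases hs) auto

lemma iview_simps [simp]: "nid (iview V E c u) = u" "nbrs (iview V E c u) = nb E u" "inp (iview V E c u) = c u"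
  by (simp_all add: iview_def)

lemma last_received_run_Suc:
  assumes "simple_graph V E"
  shows "last_received (fst (run A V E c \<omega> (Suc r)) u)
    = (\<Union>v\<in>nb E u. snd (send A (iview V E c v, fst (run A V E c \<omega> r) v) (\<omega> r v) u))"
proof -
  have "(\<Union>v. snd (if v \<in> V \<and> v \<in> nb E u then m v else (0, {}))) = (\<Union>v\<in>nb E u. snd (m v))"
    for m :: "nat \<Rightarrow> msg"
    using nb_subset[OF assms, of u] by (fastforce split: if_splits)
  then show ?thesis
    by (simp add: run_Suc_hist last_received_def)
qed

context
  fixes V :: "nat set" and E :: "nat set set" and c :: "nat \<Rightarrow> bool" and \<omega> :: "nat \<Rightarrow> nat \<Rightarrow> nat"
  assumes G: "simple_graph V E"
begin

abbreviation history :: "nat \<Rightarrow> nat \<Rightarrow> hist" where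
  "history r u \<equiv> fst (run graph_state_alg V E c \<omega> r) u"

abbreviation state :: "nat \<Rightarrow> qvec" where
  "state r \<equiv> snd (run graph_state_alg V E c \<omega> r)"

lemma finite_V: "finite V"
  using G by (simp add: simple_graph_def)

lemma nb_less_nqubits: "v \<in> nb E u \<Longrightarrow> Suc v < nqubits (iview V E c u)"
  using finite_nb[OF G] by (simp add: nqubits_def le_imp_less_Suc)

lemma ghz_qubits_iview:
  "ghz_qubits (iview V E c u) = (if c u then insert (u, 0) {(u, Suc v) | v. v \<in> nb E u \<and> u < v} else {})"
  using nb_less_nqubits by (auto simp: ghz_qubits_def)

abbreviation copies_out :: "nat \<Rightarrow> qubit set" where
  "copies_out u \<equiv> {(u, Suc v) | v. v \<in> nb E u \<and> c u \<and> u < v}"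

abbreviation copies_in :: "nat \<Rightarrow> qubit set" where
  "copies_in u \<equiv> {(v, Suc u) | v. v \<in> nb E u \<and> c v \<and> v < u}"

lemma copies_out_initial: "copies_out u \<subseteq> initial_qubits (iview V E c u)"
  by (auto simp: initial_qubits_def nb_less_nqubits)

lemma finite_copies_in: "finite (copies_in u)"
  by (rule finite_subset[of _ "(\<lambda>v. (v, Suc u)) ` nb E u"]) (auto simp: finite_nb[OF G])

lemma received_1:
  assumes "u \<in> V"
  shows "last_received (history (Suc 0) u) = copies_in u"
proof -
  have "last_received (history (Suc 0) u) = (\<Union>v\<in>nb E u. {p \<in> ghz_qubits (iview V E c v). p = (v, Suc u)})"
    by (simp add: last_received_run_Suc[OF G, where r = 0, simplified])
  also have "\<dots> = copies_in u"
    by (auto simp: ghz_qubits_iview nb_sym[of _ E u] split: if_split_asm)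
  finally show ?thesis .
qed

lemma owned_1:
  assumes "u \<in> V"
  shows "owned graph_state_alg (iview V E c u) (history (Suc 0) u) = (initial_qubits (iview V E c u) - copies_out u) \<union> copies_in u"
proof -
  have "(\<Union>v. snd (gs_send (iview V E c u, []) k v)) = copies_out u" for k
    by (auto simp: ghz_qubits_iview)
  then show ?thesis
    using received_1[OF assms] by (simp add: owned_run_Suc[where r = 0, simplified] owned_Nil)
qed

lemma received_2:
  assumes "u \<in> V"
  shows "last_received (history 2 u) = copies_out u"
proof -
  have "last_received (history 2 u) = (\<Union>v\<in>nb E u. {p \<in> copies_in v. fst p = u})"
    using received_1 nb_subset[OF G, of u] nb_sym[of _ E u]
    by (auto simp: last_received_run_Suc[OF G, where r = "Suc 0"] numeral_2_eq_2 gs_send_length_1 length_run_hist)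
  also have "\<dots> = copies_out u"
    by (auto simp: nb_sym[of _ E u])
  finally show ?thesis .
qed

lemma owned_2:
  assumes "u \<in> V"
  shows "owned graph_state_alg (iview V E c u) (history 2 u) = initial_qubits (iview V E c u)"
proof -
  have "(\<Union>v. snd (gs_send (iview V E c u, history (Suc 0) u) k v)) = copies_in u" for k
    using received_1[OF assms] by (auto simp: gs_send_length_1 length_run_hist nb_sym[of _ E u])
  moreover note copies_out_initial[of u]
  moreover have "copies_in u \<inter> initial_qubits (iview V E c u) = {}"
    by (auto simp: initial_qubits_def)
  ultimately show ?thesis
    using received_2[OF assms] owned_1[OF assms]
    by (auto simp: owned_run_Suc[where r = "Suc 0"] numeral_2_eq_2)
qed

definition ghz_basis :: "(nat \<Rightarrow> bool) \<Rightarrow> basis" where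
  "ghz_basis x = (\<lambda>p. \<exists>u\<in>V. x u \<and> p \<in> ghz_qubits (iview V E c u))"

lemma ghz_basis_vertex: "ghz_basis x (u, 0) \<longleftrightarrow> u \<in> V \<and> c u \<and> x u"
  by (auto simp: ghz_basis_def ghz_qubits_iview)

lemma ghz_basis_copy: "ghz_basis x (u, Suc v) \<longleftrightarrow> u \<in> V \<and> (u, Suc v) \<in> copies_out u \<and> x u"
  by (auto simp: ghz_basis_def ghz_qubits_iview)

abbreviation zero_outcomes :: bool where
  "zero_outcomes \<equiv> \<forall>u\<in>V. \<omega> 0 u = outcome_code (iview V E c u) (\<lambda>_. False)"

lemma prod_ghz_amplitudes:
  "(\<Prod>u\<in>V. if ghz_qubits (iview V E c u) = {} then 1 else complex_of_real (1 / sqrt 2))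
    = complex_of_real ((1 / sqrt 2) ^ card {v \<in> V. c v})"
proof -
  have "(\<Prod>u\<in>V. if ghz_qubits (iview V E c u) = {} then 1 else complex_of_real (1 / sqrt 2))
      = (\<Prod>u\<in>V. if c u then complex_of_real (1 / sqrt 2) else 1)"
    by (rule prod.cong) (simp_all add: ghz_qubits_iview)
  also have "\<dots> = (\<Prod>u\<in>{v \<in> V. c v}. complex_of_real (1 / sqrt 2))"
    by (rule prod.inter_filter[OF finite_V, symmetric])
  finally show ?thesis
    by (simp add: of_real_power)
qed

lemma state_1:
  "state (Suc 0) b = (if zero_outcomes \<and> b = ghz_basis (\<lambda>v. b (v, 0))
     then complex_of_real ((1 / sqrt 2) ^ card {v \<in> V. c v}) else 0)"
proof -
  let ?S = "\<lambda>u. initial_qubits (iview V E c u)" and ?T = "\<lambda>u. ghz_qubits (iview V E c u)"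
  let ?K = "\<lambda>u. measure_prepare (outcome_code (iview V E c u)) (ghz (?T u)) (\<omega> 0 u)"
  have "state (Suc 0) b = apply_ops V ?S ?K (\<lambda>b. if b = (\<lambda>_. False) then 1 else 0) b"
    by (simp add: run_Suc_state[where r = 0, simplified] owned_Nil)
  also have "\<dots> = (if b \<in> assigns (\<Union>u\<in>V. ?S u) then \<Prod>u\<in>V. ?K u (restr (?S u) b) (\<lambda>_. False) else 0)"
    by (rule apply_ops_basis_zero[OF finite_V]) simp
  also have "\<dots> = (if b \<in> assigns (\<Union>u\<in>V. ?S u) \<and> zero_outcomes \<and>
        (\<forall>u\<in>V. restr (?S u) b = (\<lambda>_. False) \<or> restr (?S u) b = (\<lambda>p. p \<in> ?T u))
      then \<Prod>u\<in>V. if ?T u = {} then 1 else complex_of_real (1 / sqrt 2) else 0)"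
    by (auto simp: measure_prepare_def ghz_def prod_if_zero[OF finite_V] cong: prod.cong)
  also have "\<dots> = (if zero_outcomes \<and> b = ghz_basis (\<lambda>v. b (v, 0))
     then complex_of_real ((1 / sqrt 2) ^ card {v \<in> V. c v}) else 0)"
  proof -
    have "b \<in> assigns (\<Union>u\<in>V. ?S u) \<and> (\<forall>u\<in>V. restr (?S u) b = (\<lambda>_. False) \<or> restr (?S u) b = (\<lambda>p. p \<in> ?T u))
        \<longleftrightarrow> b = ghz_basis (\<lambda>v. b (v, 0))"
      unfolding ghz_basis_def
      by (rule ghz_product_support)
        (auto simp: initial_qubits_def ghz_qubits_iview nb_less_nqubits)
    then show ?thesis
      by (auto simp: prod_ghz_amplitudes)
  qed
  finally show ?thesis .
qed

lemma cz_phases_ghz_basis: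
  "(\<Prod>u\<in>V. cz_phase (u, 0) (copies_in u) (ghz_basis x)) = (-1) ^ card {e \<in> E. e \<subseteq> {v \<in> V. c v \<and> x v}}"
proof -
  let ?A = "{v \<in> V. c v \<and> x v}"
  have vertex: "ghz_basis x (u, 0) \<longleftrightarrow> u \<in> ?A" for u
    by (simp add: ghz_basis_vertex)
  have copies: "{p \<in> copies_in u. ghz_basis x p} = (\<lambda>v. (v, Suc u)) ` {v \<in> nb E u \<inter> ?A. v < u}" for u
    using nb_subset[OF G, of u] by (auto simp: ghz_basis_def ghz_qubits_iview nb_sym[of _ E u])
  have "cz_phase (u, 0) (copies_in u) (ghz_basis x) = (if u \<in> ?A then (-1) ^ card {v \<in> nb E u \<inter> ?A. v < u} else 1)"
    for u
    unfolding cz_phase_def vertex copies by (simp add: card_image inj_on_def)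
  then have "(\<Prod>u\<in>V. cz_phase (u, 0) (copies_in u) (ghz_basis x))
      = (\<Prod>u\<in>V. if u \<in> ?A then (-1) ^ card {v \<in> nb E u \<inter> ?A. v < u} else 1)"
    by simp
  also have "\<dots> = (\<Prod>u\<in>?A. (-1) ^ card {v \<in> nb E u \<inter> ?A. v < u})"
    using finite_V by (intro prod.mono_neutral_cong_right) auto
  also have "\<dots> = (-1) ^ (\<Sum>u\<in>?A. card {v \<in> nb E u \<inter> ?A. v < u})"
    by (simp add: power_sum)
  also have "\<dots> = (-1) ^ card {e \<in> E. e \<subseteq> ?A}"
    by (simp add: card_induced_edges[OF G])
  finally show ?thesis .
qed

lemma state_2:
  "state 2 b = (if zero_outcomes \<and> b = ghz_basis (\<lambda>v. b (v, 0))
     then graph_state_amp {v \<in> V. c v} {e \<in> E. e \<subseteq> {v \<in> V. c v}} (\<lambda>v. b (v, 0)) else 0)"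
proof -
  let ?S = "\<lambda>u. owned graph_state_alg (iview V E c u) (history (Suc 0) u)"
  have "state 2 b = (\<Prod>u\<in>V. cz_phase (u, 0) (last_received (history (Suc 0) u)) (restr (?S u) b)) * state (Suc 0) b"
  proof -
    have "finite (?S u)" if "u \<in> V" for u
      using finite_copies_in by (simp add: owned_1[OF that])
    then show ?thesis
      unfolding numeral_2_eq_2 run_Suc_state[where r = "Suc 0"]
      by (intro apply_ops_diagonal finite_V) (simp_all add: gs_kraus_length_1 length_run_hist)
  qed
  also have "\<dots> = (\<Prod>u\<in>V. cz_phase (u, 0) (copies_in u) b) * state (Suc 0) b"
    by (intro arg_cong2[where f = times] prod.cong)
      (auto simp: cz_phase_restr owned_1 received_1)
  also have "\<dots> = (if zero_outcomes \<and> b = ghz_basis (\<lambda>v. b (v, 0))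
     then graph_state_amp {v \<in> V. c v} {e \<in> E. e \<subseteq> {v \<in> V. c v}} (\<lambda>v. b (v, 0)) else 0)"
  proof (cases "zero_outcomes \<and> b = ghz_basis (\<lambda>v. b (v, 0))")
    case True
    define x where "x = (\<lambda>v. b (v, 0))"
    have "b = ghz_basis x"
      using True by (simp add: x_def)
    then have "(\<Prod>u\<in>V. cz_phase (u, 0) (copies_in u) b) = (-1) ^ card {e \<in> E. e \<subseteq> {v \<in> V. c v \<and> x v}}"
      by (simp add: cz_phases_ghz_basis)
    moreover have "{e \<in> {e \<in> E. e \<subseteq> {v \<in> V. c v}}. \<forall>v\<in>e. x v} = {e \<in> E. e \<subseteq> {v \<in> V. c v \<and> x v}}"
      by blast
    ultimately show ?thesis
      using True by (simp add: state_1 graph_state_amp_def x_def)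
  next
    case False
    then show ?thesis
      by (simp only: state_1 if_False mult_zero_right)
  qed
  finally show ?thesis .
qed

definition disentangle :: "basis \<Rightarrow> basis" where
  "disentangle b = (\<lambda>p. if p \<in> (\<Union>u\<in>V. copies_out u) then b p \<noteq> b (fst p, 0) else b p)"

definition vertex_basis :: "(nat \<Rightarrow> bool) \<Rightarrow> basis" where
  "vertex_basis x = (\<lambda>p. \<exists>v\<in>V. c v \<and> x v \<and> p = (v, 0))"

lemma disentangle_vertex [simp]: "disentangle b (v, 0) = b (v, 0)"
  by (auto simp: disentangle_def)

lemma disentangle_involution [simp]: "disentangle (disentangle b) = b"
  by (auto simp: disentangle_def fun_eq_iff)

lemma disentangle_ghz_basis: "disentangle (ghz_basis x) = vertex_basis x"
proof
  fix p :: qubit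
  obtain u j where p: "p = (u, j)"
    by fastforce
  show "disentangle (ghz_basis x) p = vertex_basis x p"
    unfolding p by (cases j) (auto simp: disentangle_def vertex_basis_def ghz_basis_vertex ghz_basis_copy)
qed

lemma disentangle_eq_ghz_basis_iff:
  "disentangle b = ghz_basis (\<lambda>v. b (v, 0)) \<longleftrightarrow> b \<in> assigns {(v, 0) | v. v \<in> V \<and> c v}"
proof -
  define x where "x = (\<lambda>v. b (v, 0))"
  have "disentangle b = ghz_basis x \<longleftrightarrow> b = vertex_basis x"
    by (metis disentangle_involution disentangle_ghz_basis)
  also have "\<dots> \<longleftrightarrow> b \<in> assigns {(v, 0) | v. v \<in> V \<and> c v}"
    unfolding x_def assigns_def vertex_basis_def fun_eq_iff by auto
  finally show ?thesis
    by (simp add: x_def)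
qed

lemma state_3_disentangle: "state 3 b = state 2 (disentangle b)"
proof -
  let ?S = "\<lambda>u. initial_qubits (iview V E c u)"
  let ?U = "\<Union>u\<in>V. ?S u"
  have "state 3 = apply_ops V (\<lambda>u. owned graph_state_alg (iview V E c u) (history 2 u))
      (\<lambda>u. gs_kraus (iview V E c u, history 2 u) (\<omega> 2 u)) (state 2)"
    using run_Suc_state[where r = 2] by simp
  also have "\<dots> = apply_ops V ?S (\<lambda>u. gs_kraus (iview V E c u, history 2 u) (\<omega> 2 u)) (state 2)"
    by (rule apply_ops_cong) (rule owned_2)
  finally have "state 3 b = (\<Prod>u\<in>V. 1) * state 2 (ovr ?U b (restr ?U (disentangle b)))"
  proof (rule ssubst, intro apply_ops_monomial[OF finite_V])
    fix u assume u: "u \<in> V"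
    show "gs_kraus (iview V E c u, history 2 u) (\<omega> 2 u) = monomial_op (cnot_fan (u, 0) (copies_out u)) (\<lambda>_. 1)"
      using received_2[OF u] by (simp add: gs_kraus_length_2 length_run_hist)
    show "restr (?S u) (restr ?U (disentangle b)) = cnot_fan (u, 0) (copies_out u) (restr (?S u) b)"
    proof
      fix p :: qubit
      have "p \<in> (\<Union>w\<in>V. copies_out w) \<longleftrightarrow> p \<in> copies_out u" if "p \<in> ?S u"
        using that u by (auto simp: initial_qubits_def)
      then show "restr (?S u) (restr ?U (disentangle b)) p = cnot_fan (u, 0) (copies_out u) (restr (?S u) b) p"
        using u copies_out_initial[of u] vertex_qubit_initial_iff[of u "iview V E c u"]
        by (auto simp: restr_def cnot_fan_def disentangle_def initial_qubits_def)
    qed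
  qed (simp_all add: cnot_fan_involution)
  also have "ovr ?U b (restr ?U (disentangle b)) = disentangle b"
    using copies_out_initial by (auto simp: ovr_def restr_def disentangle_def fun_eq_iff)
  finally show ?thesis
    by simp
qed

lemma final_state:
  "state 3 b = (if zero_outcomes \<and> b \<in> assigns {(v, 0) | v. v \<in> V \<and> c v}
     then graph_state_amp {v \<in> V. c v} {e \<in> E. e \<subseteq> {v \<in> V. c v}} (\<lambda>v. b (v, 0)) else 0)"
  by (simp add: state_3_disentangle state_2 disentangle_eq_ghz_basis_iff)

lemma final_state_factorizes:
  "\<exists>\<phi>. \<forall>b. state 3 b = graph_state_amp {v \<in> V. c v} {e \<in> E. e \<subseteq> {v \<in> V. c v}} (\<lambda>v. b (v, 0))
     * \<phi> (\<lambda>p. p \<notin> {(v, 0) | v. v \<in> V \<and> c v} \<and> b p)"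
proof -
  let ?Q = "{(v, 0) | v. v \<in> V \<and> c v}"
  let ?\<phi> = "\<lambda>z. if zero_outcomes \<and> z = (\<lambda>_. False) then 1 else 0"
  have amp: "state 3 b = graph_state_amp {v \<in> V. c v} {e \<in> E. e \<subseteq> {v \<in> V. c v}} (\<lambda>v. b (v, 0))
      * ?\<phi> (\<lambda>p. p \<notin> ?Q \<and> b p)" for b
  proof -
    have "(\<lambda>p. p \<notin> ?Q \<and> b p) = (\<lambda>_. False) \<longleftrightarrow> b \<in> assigns ?Q"
      by (auto simp: assigns_def fun_eq_iff)
    then show ?thesis
      by (simp add: final_state)
  qed
  show ?thesis
    by (intro exI[of _ ?\<phi>] allI amp)
qed

end

theorem theorem3:
  shows "\<exists>A. valid_alg A \<and> solves_subgraph_state A 2"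
proof (intro exI conjI)
  show "valid_alg graph_state_alg"
    by (rule valid_graph_state_alg)
  show "solves_subgraph_state graph_state_alg 2"
    unfolding solves_subgraph_state_def Let_def graph_state_alg_simps fst_conv iview_simps
  proof (intro allI impI conjI)
    fix V E c \<omega>
    assume "simple_graph V E \<and> (\<forall>r\<le>2. \<forall>u\<in>V. \<omega> r u \<in> gs_outs (iview V E c u, fst (run graph_state_alg V E c \<omega> r) u))"
    then have G: "simple_graph V E" ..
    have image: "(\<lambda>v. (v, 0)) ` {v \<in> V. c v} = {(v, 0) | v. v \<in> V \<and> c v}" and three: "Suc 2 = (3 :: nat)"
      by auto
    show "\<exists>\<phi>. \<forall>b. snd (run graph_state_alg V E c \<omega> (Suc 2)) b =
        graph_state_amp {v \<in> V. c v} {e \<in> E. e \<subseteq> {v \<in> V. c v}} (\<lambda>v. b (v, 0))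
        * \<phi> (\<lambda>p. p \<notin> (\<lambda>v. (v, 0)) ` {v \<in> V. c v} \<and> b p)"
      unfolding image three by (rule final_state_factorizes[OF G])
    show "inj_on (\<lambda>v. (v, 0)) {v \<in> V. c v}"
      by (simp add: inj_on_def)
    show "\<forall>v\<in>{v \<in> V. c v}. (v, 0) \<in> owned graph_state_alg (iview V E c v) (fst (run graph_state_alg V E c \<omega> 2) v)"
      by (simp add: owned_2[OF G])
  qed
qed

end
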